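(* Let $X$ be a Banach space, $(Y_j)_{j\in\varGamma}$ a family of closed subspaces of $X$, and $(P_j)_{j\in\varGamma}$ a family of bounded linear projections $P_j:X\to Y_j$ such that (1) $P_j[X]=Y_j$ for all $j\in\varGamma$; (2) $P_j\circ P_i(x)=0$ for all $x\in X$ whenever $i\neq j$; (3) the formula $x\mapsto (P_j(x))_{j\in\varGamma}$ defines a bounded injective linear operator from $X$ into $\left(\bigoplus_{j\in\varGamma}Y_j\right)_{c_0}$. Then $\left(\bigoplus_{j\in\varGamma}\mathcal{F}(Y_j)\right)_{\ell_1}\stackrel{c}{\hookrightarrow}\mathcal{F}(X)$.
   Context: For a pointed metric space $M$ (Banach spaces pointed at $0$), $\operatorname{Lip}_0(M)$ is the Banach space of real Lipschitz functions vanishing at the base point with the Lipschitz-constant norm, and the Lipschitz-free space $\mathcal{F}(M)$ is the closed linear span in $\operatorname{Lip}_0(M)^*$ of the evaluation functionals $\delta_x$, $x\in M$. $\left(\bigoplus_{j}Z_j\right)_{c_0}$ is the space of families $(z_j)$ with $z_j\in Z_j$ and $\|z_j\|\to0$ (for each $\epsilon>0$ only finitely many $\|z_j\|\ge\epsilon$), with sup norm; $\left(\bigoplus_j Z_j\right)_{\ell_1}$ is the space of families with $\sum_j\|z_j\|<\infty$ and that norm. $X\stackrel{c}{\hookrightarrow}Y$ means $Y$ contains a complemented subspace isomorphic to $X$. *)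

theory Defs
  imports "HOL-Analysis.Analysis"
begin

(* Functions are
   represented as real functions on the ambient type, required to vanish
   outside M (so each element of Lip_0(M) has a unique representative). *)
definition Lip0 :: "'a::metric_space set \<Rightarrow> 'a \<Rightarrow> ('a \<Rightarrow> real) set" where
  "Lip0 M p = {f. (\<exists>L. L-lipschitz_on M f) \<and> f p = 0 \<and> (\<forall>x. x \<notin> M \<longrightarrow> f x = 0)}"

definition lipconst :: "'a::metric_space set \<Rightarrow> ('a \<Rightarrow> real) \<Rightarrow> real" where
  "lipconst M f = Inf {L. L-lipschitz_on M f}"

definition Lip0_dual :: "'a::metric_space set \<Rightarrow> 'a \<Rightarrow> (('a \<Rightarrow> real) \<Rightarrow> real) set" where
  "Lip0_dual M p = {\<phi>.
     (\<forall>f. f \<notin> Lip0 M p \<longrightarrow> \<phi> f = 0) \<and>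
     (\<forall>f\<in>Lip0 M p. \<forall>g\<in>Lip0 M p. \<phi> (\<lambda>x. f x + g x) = \<phi> f + \<phi> g) \<and>
     (\<forall>c. \<forall>f\<in>Lip0 M p. \<phi> (\<lambda>x. c * f x) = c * \<phi> f) \<and>
     (\<exists>C. \<forall>f\<in>Lip0 M p. \<bar>\<phi> f\<bar> \<le> C * lipconst M f)}"

definition dualnorm :: "'a::metric_space set \<Rightarrow> 'a \<Rightarrow> (('a \<Rightarrow> real) \<Rightarrow> real) \<Rightarrow> real" where
  "dualnorm M p \<phi> = Sup {\<bar>\<phi> f\<bar> | f. f \<in> Lip0 M p \<and> lipconst M f \<le> 1}"

definition delta :: "'a::metric_space set \<Rightarrow> 'a \<Rightarrow> 'a \<Rightarrow> (('a \<Rightarrow> real) \<Rightarrow> real)" where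
  "delta M p x = (\<lambda>f. if f \<in> Lip0 M p then f x else 0)"

definition molecules :: "'a::metric_space set \<Rightarrow> 'a \<Rightarrow> (('a \<Rightarrow> real) \<Rightarrow> real) set" where
  "molecules M p = {\<phi>. \<exists>S a. finite S \<and> S \<subseteq> M \<and> \<phi> = (\<lambda>f. \<Sum>x\<in>S. a x * delta M p x f)}"

definition free_space :: "'a::metric_space set \<Rightarrow> 'a \<Rightarrow> (('a \<Rightarrow> real) \<Rightarrow> real) set" where
  "free_space M p = {\<phi>. \<phi> \<in> Lip0_dual M p \<and>
     (\<forall>\<epsilon>>0. \<exists>m\<in>molecules M p. dualnorm M p (\<lambda>f. \<phi> f - m f) < \<epsilon>)}"

definition fadd :: "('b \<Rightarrow> real) \<Rightarrow> ('b \<Rightarrow> real) \<Rightarrow> ('b \<Rightarrow> real)" where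
  "fadd \<phi> \<psi> = (\<lambda>f. \<phi> f + \<psi> f)"
definition fscale :: "real \<Rightarrow> ('b \<Rightarrow> real) \<Rightarrow> ('b \<Rightarrow> real)" where
  "fscale c \<phi> = (\<lambda>f. c * \<phi> f)"

definition l1_free_sum :: "'j set \<Rightarrow> ('j \<Rightarrow> 'a::real_normed_vector set) \<Rightarrow> ('j \<Rightarrow> ('a \<Rightarrow> real) \<Rightarrow> real) set" where
  "l1_free_sum \<Gamma> Y = {u. (\<forall>j\<in>\<Gamma>. u j \<in> free_space (Y j) 0) \<and> (\<forall>j. j \<notin> \<Gamma> \<longrightarrow> u j = (\<lambda>f. 0)) \<and>
      (\<lambda>j. dualnorm (Y j) 0 (u j)) summable_on \<Gamma>}"

definition l1_norm :: "'j set \<Rightarrow> ('j \<Rightarrow> 'a::real_normed_vector set) \<Rightarrow> ('j \<Rightarrow> ('a \<Rightarrow> real) \<Rightarrow> real) \<Rightarrow> real" where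
  "l1_norm \<Gamma> Y u = infsum (\<lambda>j. dualnorm (Y j) 0 (u j)) \<Gamma>"

definition ladd :: "('j \<Rightarrow> 'b \<Rightarrow> real) \<Rightarrow> ('j \<Rightarrow> 'b \<Rightarrow> real) \<Rightarrow> ('j \<Rightarrow> 'b \<Rightarrow> real)" where
  "ladd u v = (\<lambda>j. fadd (u j) (v j))"
definition lscale :: "real \<Rightarrow> ('j \<Rightarrow> 'b \<Rightarrow> real) \<Rightarrow> ('j \<Rightarrow> 'b \<Rightarrow> real)" where
  "lscale c u = (\<lambda>j. fscale c (u j))"

(* X c\<hookrightarrow> Y : Y (carrier V, norm NV) contains a complemented subspace isomorphic to
   X (carrier U, norm NU): T is a linear isomorphic embedding of U into V and Q is a
   bounded linear projection of V onto T[U]. *)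
definition compl_embeds ::
  "'u set \<Rightarrow> ('u \<Rightarrow> real) \<Rightarrow> ('u \<Rightarrow> 'u \<Rightarrow> 'u) \<Rightarrow> (real \<Rightarrow> 'u \<Rightarrow> 'u) \<Rightarrow>
   'v set \<Rightarrow> ('v \<Rightarrow> real) \<Rightarrow> ('v \<Rightarrow> 'v \<Rightarrow> 'v) \<Rightarrow> (real \<Rightarrow> 'v \<Rightarrow> 'v) \<Rightarrow> bool" where
  "compl_embeds U NU addU scU V NV addV scV \<longleftrightarrow>
    (\<exists>T Q.
      (\<forall>u\<in>U. T u \<in> V) \<and>
      (\<forall>u\<in>U. \<forall>u'\<in>U. T (addU u u') = addV (T u) (T u')) \<and>
      (\<forall>c. \<forall>u\<in>U. T (scU c u) = scV c (T u)) \<and>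
      (\<exists>c>0. \<exists>C. \<forall>u\<in>U. c * NU u \<le> NV (T u) \<and> NV (T u) \<le> C * NU u) \<and>
      (\<forall>v\<in>V. Q v \<in> T ` U) \<and>
      (\<forall>v\<in>V. \<forall>v'\<in>V. Q (addV v v') = addV (Q v) (Q v')) \<and>
      (\<forall>c. \<forall>v\<in>V. Q (scV c v) = scV c (Q v)) \<and>
      (\<exists>C. \<forall>v\<in>V. NV (Q v) \<le> C * NV v) \<and>
      (\<forall>u\<in>U. Q (T u) = T u))"

end

theory Submission
  imports Defs
begin

(* Write N(x) = sup_j ||P_j x|| and w_j(x) = max 0 (||P_j x|| - sup_{i ~= j} ||P_i x||).
   The map T sending (mu_j)_j to sum_j mu_j, where mu_j acts on f in Lip_0(X) through the
   restriction of f to Y_j, has norm at most 1.  Conversely,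
     E_j g (x) = g (P_j x) * w_j(x) / N(x)
   is a linear extension operator Lip_0(Y_j) -> Lip_0(X) of norm at most 4K, where K >= 1 bounds
   all ||P_j||: E_j g agrees with g on Y_j and vanishes on Y_i for i ~= j.  At each point at most
   one weight w_j is positive, so a sum of extensions E_j g_j with Lip(g_j) <= 1 is 8K-Lipschitz; testing against such sums
   shows that Q v = (v o E_j)_j maps F(X) into the l_1-sum with norm at most 8K.  Finally
   Q o T = id, so T is an isomorphic embedding and T o Q a bounded projection onto its range.
   Below, N is pnorm, w_j is weight j, E_j is extension j, T is embed and Q is coords. *)

lemma lipconst_lipschitz_on:
  assumes "L-lipschitz_on M f"
  shows "(lipconst M f)-lipschitz_on M f"
proof -
  let ?S = "{L. L-lipschitz_on M f}"
  have ne: "?S \<noteq> {}" using assms by blast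
  have nn: "0 \<le> lipconst M f"
    unfolding lipconst_def by (rule cInf_greatest[OF ne]) (auto dest: lipschitz_on_nonneg)
  show ?thesis
  proof (rule lipschitz_onI[OF _ nn])
    fix x y assume xy: "x \<in> M" "y \<in> M"
    show "dist (f x) (f y) \<le> lipconst M f * dist x y"
    proof (cases "x = y")
      case False
      then have dp: "dist x y > 0" by simp
      have "dist (f x) (f y) / dist x y \<le> lipconst M f"
        unfolding lipconst_def
      proof (rule cInf_greatest[OF ne])
        fix L assume "L \<in> ?S"
        then have "dist (f x) (f y) \<le> L * dist x y" using xy by (auto dest: lipschitz_onD)
        then show "dist (f x) (f y) / dist x y \<le> L" using dp by (simp add: divide_le_eq)
      qed
      then show ?thesis using dp by (simp add: divide_le_eq)
    qed simp
  qed
qed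

lemma lipconst_le:
  assumes "L-lipschitz_on M f"
  shows "lipconst M f \<le> L"
  unfolding lipconst_def
  by (rule cInf_lower) (use assms in \<open>auto intro!: bdd_belowI[of _ 0] dest: lipschitz_on_nonneg\<close>)

lemma Lip0_lipschitz_on: "f \<in> Lip0 M p \<Longrightarrow> (lipconst M f)-lipschitz_on M f"
  unfolding Lip0_def using lipconst_lipschitz_on by blast

lemma Lip0_lipconst_nonneg: "f \<in> Lip0 M p \<Longrightarrow> 0 \<le> lipconst M f"
  using Lip0_lipschitz_on lipschitz_on_nonneg by blast

lemma Lip0_base: "f \<in> Lip0 M p \<Longrightarrow> f p = 0"
  unfolding Lip0_def by blast

lemma Lip0_zero: "(\<lambda>x. 0) \<in> Lip0 M p"
  unfolding Lip0_def using lipschitz_on_constant by blast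

lemma Lip0_add: "f \<in> Lip0 M p \<Longrightarrow> g \<in> Lip0 M p \<Longrightarrow> (\<lambda>x. f x + g x) \<in> Lip0 M p"
  unfolding Lip0_def using lipschitz_on_add by fastforce

lemma Lip0_cmult: "f \<in> Lip0 M p \<Longrightarrow> (\<lambda>x. c * f x) \<in> Lip0 M p"
  unfolding Lip0_def using lipschitz_on_cmult_real by fastforce

lemma Lip0_sum:
  "finite F \<Longrightarrow> (\<And>i. i \<in> F \<Longrightarrow> h i \<in> Lip0 M p) \<Longrightarrow> (\<lambda>x. \<Sum>i\<in>F. h i x) \<in> Lip0 M p"
  by (induction F rule: finite_induct) (auto intro: Lip0_zero Lip0_add)

lemma Lip0_abs_le:
  assumes "f \<in> Lip0 M p" "x \<in> M" "p \<in> M"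
  shows "\<bar>f x\<bar> \<le> lipconst M f * dist x p"
  using lipschitz_onD[OF Lip0_lipschitz_on[OF assms(1)] assms(2,3)] Lip0_base[OF assms(1)]
  by (simp add: dist_real_def)

definition zero_outside :: "'a set \<Rightarrow> ('a \<Rightarrow> real) \<Rightarrow> 'a \<Rightarrow> real" where
  "zero_outside A f = (\<lambda>x. if x \<in> A then f x else 0)"

lemma zero_outside_Lip0:
  assumes f: "f \<in> Lip0 UNIV p" and p: "p \<in> A"
  shows "zero_outside A f \<in> Lip0 A p" "lipconst A (zero_outside A f) \<le> lipconst UNIV f"
proof -
  have "(lipconst UNIV f)-lipschitz_on A (zero_outside A f)"
    using Lip0_lipschitz_on[OF f] Lip0_lipconst_nonneg[OF f]
    by (auto simp: zero_outside_def intro!: lipschitz_onI dest: lipschitz_onD)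
  then show "zero_outside A f \<in> Lip0 A p" "lipconst A (zero_outside A f) \<le> lipconst UNIV f"
    using p Lip0_base[OF f] by (auto simp: Lip0_def zero_outside_def intro: lipconst_le)
qed

lemma zero_outside_add: "zero_outside A (\<lambda>x. f x + g x) = (\<lambda>x. zero_outside A f x + zero_outside A g x)"
  by (simp add: zero_outside_def fun_eq_iff)

lemma zero_outside_cmult: "zero_outside A (\<lambda>x. c * f x) = (\<lambda>x. c * zero_outside A f x)"
  by (simp add: zero_outside_def fun_eq_iff)

lemma Lip0_dualI:
  assumes "\<And>f. f \<notin> Lip0 M p \<Longrightarrow> \<phi> f = 0"
    and "\<And>f g. f \<in> Lip0 M p \<Longrightarrow> g \<in> Lip0 M p \<Longrightarrow> \<phi> (\<lambda>x. f x + g x) = \<phi> f + \<phi> g"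
    and "\<And>c f. f \<in> Lip0 M p \<Longrightarrow> \<phi> (\<lambda>x. c * f x) = c * \<phi> f"
    and "\<And>f. f \<in> Lip0 M p \<Longrightarrow> \<bar>\<phi> f\<bar> \<le> C * lipconst M f"
  shows "\<phi> \<in> Lip0_dual M p"
  unfolding Lip0_dual_def using assms by blast

lemma Lip0_dual_add:
  "\<phi> \<in> Lip0_dual M p \<Longrightarrow> f \<in> Lip0 M p \<Longrightarrow> g \<in> Lip0 M p \<Longrightarrow> \<phi> (\<lambda>x. f x + g x) = \<phi> f + \<phi> g"
  unfolding Lip0_dual_def by blast

lemma Lip0_dual_cmult: "\<phi> \<in> Lip0_dual M p \<Longrightarrow> f \<in> Lip0 M p \<Longrightarrow> \<phi> (\<lambda>x. c * f x) = c * \<phi> f"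
  unfolding Lip0_dual_def by blast

lemma Lip0_dual_outside: "\<phi> \<in> Lip0_dual M p \<Longrightarrow> f \<notin> Lip0 M p \<Longrightarrow> \<phi> f = 0"
  unfolding Lip0_dual_def by blast

lemma Lip0_dual_zero: "\<phi> \<in> Lip0_dual M p \<Longrightarrow> \<phi> (\<lambda>x. 0) = 0"
  using Lip0_dual_add[OF _ Lip0_zero Lip0_zero, of \<phi> M p] by simp

lemma Lip0_dual_sum:
  assumes \<phi>: "\<phi> \<in> Lip0_dual M p" and "finite F" and "\<And>i. i \<in> F \<Longrightarrow> h i \<in> Lip0 M p"
  shows "\<phi> (\<lambda>x. \<Sum>i\<in>F. h i x) = (\<Sum>i\<in>F. \<phi> (h i))"
  using assms(2,3)
proof (induction F rule: finite_induct)
  case empty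
  then show ?case using Lip0_dual_zero[OF \<phi>] by simp
next
  case (insert a F)
  then show ?case
    using Lip0_dual_add[OF \<phi>, of "h a" "\<lambda>x. \<Sum>i\<in>F. h i x"] Lip0_sum[of F h M p] by simp
qed

lemma Lip0_dual_diff:
  assumes \<phi>: "\<phi> \<in> Lip0_dual M p" and \<psi>: "\<psi> \<in> Lip0_dual M p"
  shows "(\<lambda>f. \<phi> f - \<psi> f) \<in> Lip0_dual M p"
proof -
  obtain C D where "\<forall>f\<in>Lip0 M p. \<bar>\<phi> f\<bar> \<le> C * lipconst M f" "\<forall>f\<in>Lip0 M p. \<bar>\<psi> f\<bar> \<le> D * lipconst M f"
    using assms unfolding Lip0_dual_def by blast
  then have bound: "\<bar>\<phi> f - \<psi> f\<bar> \<le> (C + D) * lipconst M f" if "f \<in> Lip0 M p" for f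
    using that by (fastforce simp: algebra_simps)
  show ?thesis
    by (rule Lip0_dualI[where C = "C + D"])
       (simp_all add: bound Lip0_dual_outside[OF \<phi>] Lip0_dual_outside[OF \<psi>] Lip0_dual_add[OF \<phi>]
         Lip0_dual_add[OF \<psi>] Lip0_dual_cmult[OF \<phi>] Lip0_dual_cmult[OF \<psi>] right_diff_distrib)
qed

lemma lipconst_zero_le: "lipconst M (\<lambda>x. 0) \<le> 0"
  by (rule lipconst_le) (rule lipschitz_on_constant)

lemma dualnorm_set_nonempty: "\<bar>\<phi> (\<lambda>x. 0)\<bar> \<in> {\<bar>\<phi> f\<bar> | f. f \<in> Lip0 M p \<and> lipconst M f \<le> 1}"
  using Lip0_zero[of M p] lipconst_zero_le[of M] by fastforce

lemma dualnorm_set_bdd_above: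
  assumes "\<phi> \<in> Lip0_dual M p"
  shows "bdd_above {\<bar>\<phi> f\<bar> | f. f \<in> Lip0 M p \<and> lipconst M f \<le> 1}"
proof -
  obtain C where C: "\<forall>f\<in>Lip0 M p. \<bar>\<phi> f\<bar> \<le> C * lipconst M f"
    using assms unfolding Lip0_dual_def by blast
  have "\<bar>\<phi> f\<bar> \<le> \<bar>C\<bar>" if "f \<in> Lip0 M p" "lipconst M f \<le> 1" for f
  proof -
    have "C * lipconst M f \<le> \<bar>C\<bar> * lipconst M f"
      by (rule mult_right_mono[OF abs_ge_self Lip0_lipconst_nonneg[OF that(1)]])
    also have "\<dots> \<le> \<bar>C\<bar>" using that(2) by (simp add: mult_left_le)
    finally show ?thesis using C that(1) by force
  qed
  then show ?thesis by (auto intro!: bdd_aboveI[of _ "\<bar>C\<bar>"])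
qed

lemma dualnorm_upper:
  "\<phi> \<in> Lip0_dual M p \<Longrightarrow> f \<in> Lip0 M p \<Longrightarrow> lipconst M f \<le> 1 \<Longrightarrow> \<bar>\<phi> f\<bar> \<le> dualnorm M p \<phi>"
  unfolding dualnorm_def by (rule cSup_upper[OF _ dualnorm_set_bdd_above]) auto

lemma dualnorm_nonneg: "\<phi> \<in> Lip0_dual M p \<Longrightarrow> 0 \<le> dualnorm M p \<phi>"
  using dualnorm_upper[OF _ Lip0_zero, of \<phi> M p] lipconst_zero_le[of M] by fastforce

lemma Lip0_dual_bound:
  assumes \<phi>: "\<phi> \<in> Lip0_dual M p" and f: "f \<in> Lip0 M p"
  shows "\<bar>\<phi> f\<bar> \<le> dualnorm M p \<phi> * lipconst M f"
proof (cases "lipconst M f = 0")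
  case True
  obtain C where "\<forall>f\<in>Lip0 M p. \<bar>\<phi> f\<bar> \<le> C * lipconst M f"
    using \<phi> unfolding Lip0_dual_def by blast
  then show ?thesis using True f by force
next
  case False
  define L where "L = lipconst M f"
  have L: "L > 0" using False Lip0_lipconst_nonneg[OF f] by (simp add: L_def)
  have "(\<bar>1/L\<bar> * L)-lipschitz_on M (\<lambda>x. (1/L) * f x)"
    by (rule lipschitz_on_cmult_real) (use Lip0_lipschitz_on[OF f] L_def in simp)
  then have "lipconst M (\<lambda>x. (1/L) * f x) \<le> 1" using L by (simp add: lipconst_le)
  then have "\<bar>\<phi> (\<lambda>x. (1/L) * f x)\<bar> \<le> dualnorm M p \<phi>"
    by (rule dualnorm_upper[OF \<phi> Lip0_cmult[OF f]])
  moreover have "\<phi> (\<lambda>x. (1/L) * f x) = (1/L) * \<phi> f" by (rule Lip0_dual_cmult[OF \<phi> f])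
  ultimately have "\<bar>\<phi> f\<bar> / L \<le> dualnorm M p \<phi>" using L by (simp add: abs_mult)
  then show ?thesis using L by (simp add: L_def divide_le_eq mult.commute)
qed

lemma dualnorm_le:
  assumes "\<And>f. f \<in> Lip0 M p \<Longrightarrow> \<bar>\<phi> f\<bar> \<le> B * lipconst M f" and "0 \<le> B"
  shows "dualnorm M p \<phi> \<le> B"
  unfolding dualnorm_def
proof (rule cSup_least)
  show "{\<bar>\<phi> f\<bar> | f. f \<in> Lip0 M p \<and> lipconst M f \<le> 1} \<noteq> {}"
    using dualnorm_set_nonempty by blast
next
  fix s assume "s \<in> {\<bar>\<phi> f\<bar> | f. f \<in> Lip0 M p \<and> lipconst M f \<le> 1}"
  then obtain f where f: "f \<in> Lip0 M p" "lipconst M f \<le> 1" "s = \<bar>\<phi> f\<bar>" by blast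
  have "B * lipconst M f \<le> B" using f(2) assms(2) by (simp add: mult_left_le)
  then show "s \<le> B" using assms(1)[OF f(1)] f(3) by simp
qed

lemma dualnorm_approx:
  assumes \<phi>: "\<phi> \<in> Lip0_dual M p" and "\<delta> > 0"
  obtains g where "g \<in> Lip0 M p" "lipconst M g \<le> 1" "dualnorm M p \<phi> - \<delta> \<le> \<phi> g"
proof -
  let ?S = "{\<bar>\<phi> f\<bar> | f. f \<in> Lip0 M p \<and> lipconst M f \<le> 1}"
  have ne: "?S \<noteq> {}" using dualnorm_set_nonempty by blast
  have "dualnorm M p \<phi> - \<delta> < Sup ?S" using assms(2) unfolding dualnorm_def by simp
  then obtain s where "s \<in> ?S" "dualnorm M p \<phi> - \<delta> < s" using less_cSupE[OF _ ne] by blast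
  then obtain f where f: "f \<in> Lip0 M p" "lipconst M f \<le> 1" "dualnorm M p \<phi> - \<delta> < \<bar>\<phi> f\<bar>"
    by blast
  show ?thesis
  proof (cases "\<phi> f \<ge> 0")
    case True
    then show ?thesis using that[OF f(1,2)] f(3) by simp
  next
    case False
    have "(\<bar>-1\<bar> * lipconst M f)-lipschitz_on M (\<lambda>x. (-1) * f x)"
      by (rule lipschitz_on_cmult_real) (rule Lip0_lipschitz_on[OF f(1)])
    then have "lipconst M (\<lambda>x. (-1) * f x) \<le> 1" using f(2) lipconst_le by fastforce
    moreover have "\<phi> (\<lambda>x. (-1) * f x) = - \<phi> f" using Lip0_dual_cmult[OF \<phi> f(1), of "-1"] by simp
    ultimately show ?thesis using that[OF Lip0_cmult[OF f(1)], of "-1"] f(3) False by simp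
  qed
qed

lemma molecules_Lip0_dual:
  assumes "m \<in> molecules M p" "p \<in> M"
  shows "m \<in> Lip0_dual M p"
proof -
  obtain S a where S: "finite S" "S \<subseteq> M" "m = (\<lambda>f. \<Sum>x\<in>S. a x * delta M p x f)"
    using assms(1) unfolding molecules_def by blast
  have bound: "\<bar>m f\<bar> \<le> (\<Sum>x\<in>S. \<bar>a x\<bar> * dist x p) * lipconst M f" if f: "f \<in> Lip0 M p" for f
  proof -
    have "\<bar>m f\<bar> \<le> (\<Sum>x\<in>S. \<bar>a x\<bar> * \<bar>f x\<bar>)"
      using S f sum_abs[of "\<lambda>x. a x * f x" S] by (simp add: delta_def abs_mult)
    also have "\<dots> \<le> (\<Sum>x\<in>S. \<bar>a x\<bar> * (lipconst M f * dist x p))"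
      using Lip0_abs_le[OF f _ assms(2)] S(2) by (intro sum_mono mult_left_mono) auto
    also have "\<dots> = (\<Sum>x\<in>S. \<bar>a x\<bar> * dist x p) * lipconst M f"
      by (subst sum_distrib_right) (simp add: ac_simps)
    finally show ?thesis .
  qed
  show ?thesis
    using S(3) by (intro Lip0_dualI[where C = "\<Sum>x\<in>S. \<bar>a x\<bar> * dist x p"] bound)
       (auto simp: delta_def Lip0_add Lip0_cmult sum.distrib sum_distrib_left algebra_simps)
qed

lemma free_space_Lip0_dual: "v \<in> free_space M p \<Longrightarrow> v \<in> Lip0_dual M p"
  unfolding free_space_def by blast

lemma lipschitz_on_pos_part:
  fixes h :: "'a::metric_space \<Rightarrow> real"
  assumes "L-lipschitz_on U h"
  shows "L-lipschitz_on U (\<lambda>x. max 0 (h x))"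
proof (rule lipschitz_onI)
  fix x y assume "x \<in> U" "y \<in> U"
  moreover have "\<bar>max 0 (h x) - max 0 (h y)\<bar> \<le> \<bar>h x - h y\<bar>" by linarith
  ultimately show "dist (max 0 (h x)) (max 0 (h y)) \<le> L * dist x y"
    using lipschitz_onD[OF assms] by (fastforce simp: dist_real_def)
qed (rule lipschitz_on_nonneg[OF assms])

lemma infsum_tail_small:
  fixes d :: "'j \<Rightarrow> real"
  assumes d: "d summable_on A" and "\<epsilon> > 0"
  obtains F where "finite F" "F \<subseteq> A" "\<bar>infsum d (A - F)\<bar> \<le> \<epsilon>"
proof -
  obtain F where F: "finite F" "F \<subseteq> A" "dist (sum d F) (infsum d A) \<le> \<epsilon>"
    using infsum_finite_approximation[OF d \<open>\<epsilon> > 0\<close>] by blast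
  have "infsum d (A - F) = infsum d A - sum d F"
    using infsum_Diff[OF d summable_on_finite[OF F(1)] F(2)] F(1) by simp
  then show ?thesis using that F by (simp add: dist_real_def abs_minus_commute)
qed

lemma molecules_glue:
  assumes fin: "finite F" and m: "\<And>j. j \<in> F \<Longrightarrow> m j \<in> molecules (A j) p"
    and p: "\<And>j. j \<in> F \<Longrightarrow> p \<in> A j"
  shows "\<exists>m'\<in>molecules UNIV p. \<forall>f\<in>Lip0 UNIV p. m' f = (\<Sum>j\<in>F. m j (zero_outside (A j) f))"
proof -
  have "\<forall>j\<in>F. \<exists>S a. finite S \<and> S \<subseteq> A j \<and> m j = (\<lambda>f. \<Sum>x\<in>S. a x * delta (A j) p x f)"
    using m unfolding molecules_def by blast
  then obtain S a where Sa: "\<And>j. j \<in> F \<Longrightarrow> finite (S j) \<and> S j \<subseteq> A j \<and>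
      m j = (\<lambda>f. \<Sum>x\<in>S j. a j x * delta (A j) p x f)"
    by metis
  define SS where "SS = (\<Union>j\<in>F. S j)"
  define c where "c x = (\<Sum>j\<in>F. if x \<in> S j then a j x else 0)" for x
  have finSS: "finite SS" unfolding SS_def using fin Sa by auto
  show ?thesis
  proof (intro bexI ballI)
    show "(\<lambda>f. \<Sum>x\<in>SS. c x * delta UNIV p x f) \<in> molecules UNIV p"
      unfolding molecules_def using finSS by blast
  next
    fix f assume f: "f \<in> Lip0 UNIV p"
    have "(\<Sum>x\<in>SS. c x * delta UNIV p x f) = (\<Sum>x\<in>SS. \<Sum>j\<in>F. if x \<in> S j then a j x * f x else 0)"
      using f unfolding c_def delta_def sum_distrib_right by (intro sum.cong) auto
    also have "\<dots> = (\<Sum>j\<in>F. \<Sum>x\<in>SS. if x \<in> S j then a j x * f x else 0)" by (rule sum.swap)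
    also have "\<dots> = (\<Sum>j\<in>F. \<Sum>x\<in>S j. a j x * f x)"
    proof (rule sum.cong[OF refl])
      fix j assume "j \<in> F"
      then have "SS \<inter> S j = S j" unfolding SS_def by auto
      then show "(\<Sum>x\<in>SS. if x \<in> S j then a j x * f x else 0) = (\<Sum>x\<in>S j. a j x * f x)"
        using sum.inter_restrict[OF finSS, of "\<lambda>x. a j x * f x" "S j"] by simp
    qed
    also have "\<dots> = (\<Sum>j\<in>F. m j (zero_outside (A j) f))"
      using Sa zero_outside_Lip0(1)[OF f p]
      by (intro sum.cong) (auto simp: delta_def zero_outside_def subset_iff intro!: sum.cong)
    finally show "(\<Sum>x\<in>SS. c x * delta UNIV p x f) = (\<Sum>j\<in>F. m j (zero_outside (A j) f))" .
  qed
qed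

lemma lipschitz_on_mult_divide:
  fixes a b n :: "'a::metric_space \<Rightarrow> real"
  assumes an: "\<And>x. \<bar>a x\<bar> \<le> L * n x" and bn: "\<And>x. 0 \<le> b x \<and> b x \<le> n x"
    and la: "La-lipschitz_on UNIV a" and lb: "Lb-lipschitz_on UNIV b"
    and ln: "Lc-lipschitz_on UNIV n" and L0: "0 \<le> L"
  shows "(La + L * (Lb + Lc))-lipschitz_on UNIV (\<lambda>x. a x * b x / n x)"
proof (rule lipschitz_onI)
  have La0: "0 \<le> La" "0 \<le> Lb" "0 \<le> Lc" using la lb ln lipschitz_on_nonneg by blast+
  then show "0 \<le> La + L * (Lb + Lc)" using L0 by simp
  have n0: "0 \<le> n x" for x using bn[of x] by linarith
  have ratio: "0 \<le> b x / n x \<and> b x / n x \<le> 1" for x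
    using bn[of x] n0[of x] by (cases "n x = 0") (auto simp: divide_le_eq)
  have at_zero: "\<bar>a x * b x / n x - a y * b y / n y\<bar> \<le> (La + L * (Lb + Lc)) * dist x y"
    if nx: "n x = 0" for x y
  proof -
    have ax: "a x = 0" using an[of x] nx L0 by simp
    have "\<bar>a x * b x / n x - a y * b y / n y\<bar> = \<bar>a y\<bar> * (b y / n y)"
      using nx bn[of y] n0[of y] by (simp add: abs_mult)
    also have "\<dots> \<le> \<bar>a y\<bar>" by (rule mult_left_le) (use ratio[of y] in auto)
    also have "\<dots> = dist (a y) (a x)" using ax by (simp add: dist_real_def)
    also have "\<dots> \<le> La * dist y x" using lipschitz_onD[OF la] by blast
    also have "\<dots> \<le> (La + L * (Lb + Lc)) * dist x y"
      using La0 L0 by (simp add: dist_commute mult_right_mono)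
    finally show ?thesis .
  qed
  fix x y :: 'a
  show "dist (a x * b x / n x) (a y * b y / n y) \<le> (La + L * (Lb + Lc)) * dist x y"
  proof (cases "n x = 0 \<or> n y = 0")
    case True
    then show ?thesis
      using at_zero[of x y] at_zero[of y x] by (auto simp: dist_real_def dist_commute abs_minus_commute)
  next
    case False
    then have nxp: "n x > 0" and nyp: "n y > 0" using n0 by (auto simp: less_le)
    define px where "px = b x / n x"
    define py where "py = b y / n y"
    have py: "0 \<le> py" "py \<le> 1" using ratio[of y] py_def by auto
    have split: "a x * b x / n x - a y * b y / n y = a x * (px - py) + (a x - a y) * py"
      by (simp add: px_def py_def algebra_simps diff_divide_distrib)
    have e2: "n x * (px - py) = (b x - b y) + py * (n y - n x)"
      using nxp nyp by (simp add: px_def py_def field_simps)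
    have db: "\<bar>b x - b y\<bar> \<le> Lb * dist x y"
      using lipschitz_onD[OF lb] by (simp add: dist_real_def)
    have dn: "\<bar>n y - n x\<bar> \<le> Lc * dist x y"
      using lipschitz_onD[OF ln] by (simp add: dist_real_def abs_minus_commute)
    have da: "\<bar>a x - a y\<bar> \<le> La * dist x y"
      using lipschitz_onD[OF la] by (simp add: dist_real_def)
    have "\<bar>py * (n y - n x)\<bar> \<le> \<bar>n y - n x\<bar>" using py by (simp add: abs_mult mult_left_le_one_le)
    then have t1: "\<bar>n x * (px - py)\<bar> \<le> (Lb + Lc) * dist x y"
      using e2 db dn by (simp add: algebra_simps)
    have "\<bar>a x * (px - py)\<bar> \<le> L * n x * \<bar>px - py\<bar>"
      using an[of x] by (simp add: abs_mult mult_right_mono)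
    also have "\<dots> = L * \<bar>n x * (px - py)\<bar>" using nxp by (simp add: abs_mult)
    also have "\<dots> \<le> L * ((Lb + Lc) * dist x y)" using t1 L0 by (simp add: mult_left_mono)
    finally have t2: "\<bar>a x * (px - py)\<bar> \<le> L * ((Lb + Lc) * dist x y)" .
    have "\<bar>(a x - a y) * py\<bar> \<le> \<bar>a x - a y\<bar>" using py by (simp add: abs_mult mult_left_le)
    then have t3: "\<bar>(a x - a y) * py\<bar> \<le> La * dist x y" using da by linarith
    have "\<bar>a x * (px - py)\<bar> + \<bar>(a x - a y) * py\<bar> \<le> (La + L * (Lb + Lc)) * dist x y"
      using t2 t3 by (simp add: algebra_simps)
    then show ?thesis unfolding dist_real_def split by (rule order_trans[OF abs_triangle_ineq])
  qed
qed

lemma l1_free_sum_free_space: "u \<in> l1_free_sum \<Gamma> Y \<Longrightarrow> j \<in> \<Gamma> \<Longrightarrow> u j \<in> free_space (Y j) 0"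
  unfolding l1_free_sum_def by blast

lemma l1_free_sum_Lip0_dual: "u \<in> l1_free_sum \<Gamma> Y \<Longrightarrow> j \<in> \<Gamma> \<Longrightarrow> u j \<in> Lip0_dual (Y j) 0"
  by (rule free_space_Lip0_dual[OF l1_free_sum_free_space])

lemma l1_free_sum_outside: "u \<in> l1_free_sum \<Gamma> Y \<Longrightarrow> j \<notin> \<Gamma> \<Longrightarrow> u j = (\<lambda>f. 0)"
  unfolding l1_free_sum_def by blast

lemma l1_free_sum_summable: "u \<in> l1_free_sum \<Gamma> Y \<Longrightarrow> (\<lambda>j. dualnorm (Y j) 0 (u j)) summable_on \<Gamma>"
  unfolding l1_free_sum_def by blast

lemma l1_norm_nonneg: "u \<in> l1_free_sum \<Gamma> Y \<Longrightarrow> 0 \<le> l1_norm \<Gamma> Y u"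
  unfolding l1_norm_def by (rule infsum_nonneg) (rule dualnorm_nonneg[OF l1_free_sum_Lip0_dual])

locale disjoint_projections =
  fixes \<Gamma> :: "'j set" and Y :: "'j \<Rightarrow> 'a::banach set" and P :: "'j \<Rightarrow> 'a \<Rightarrow> 'a"
  assumes bounded_linear_P: "\<And>j. j \<in> \<Gamma> \<Longrightarrow> bounded_linear (P j)"
    and P_idem: "\<And>j x. j \<in> \<Gamma> \<Longrightarrow> P j (P j x) = P j x"
    and range_P: "\<And>j. j \<in> \<Gamma> \<Longrightarrow> range (P j) = Y j"
    and P_orth: "\<And>i j x. i \<in> \<Gamma> \<Longrightarrow> j \<in> \<Gamma> \<Longrightarrow> i \<noteq> j \<Longrightarrow> P j (P i x) = 0"
    and P_uniformly_bounded: "\<exists>C. \<forall>x. \<forall>j\<in>\<Gamma>. norm (P j x) \<le> C * norm x"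
begin

definition K :: real where "K = max 1 (SOME C. \<forall>x. \<forall>j\<in>\<Gamma>. norm (P j x) \<le> C * norm x)"

lemma K_ge_1: "1 \<le> K"
  unfolding K_def by simp

lemma norm_P_le: "j \<in> \<Gamma> \<Longrightarrow> norm (P j x) \<le> K * norm x"
proof -
  assume j: "j \<in> \<Gamma>"
  define C where "C = (SOME C. \<forall>x. \<forall>j\<in>\<Gamma>. norm (P j x) \<le> C * norm x)"
  have "\<forall>x. \<forall>j\<in>\<Gamma>. norm (P j x) \<le> C * norm x"
    unfolding C_def by (rule someI_ex[OF P_uniformly_bounded])
  then have "norm (P j x) \<le> C * norm x" using j by blast
  also have "\<dots> \<le> K * norm x" unfolding K_def C_def[symmetric] by (rule mult_right_mono) auto
  finally show ?thesis .
qed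

lemma P_zero: "j \<in> \<Gamma> \<Longrightarrow> P j 0 = 0"
  using linear_0[OF bounded_linear.linear[OF bounded_linear_P]] by metis

lemma dist_P_le: "j \<in> \<Gamma> \<Longrightarrow> dist (P j x) (P j y) \<le> K * dist x y"
  using norm_P_le[of j "x - y"] linear_diff[OF bounded_linear.linear[OF bounded_linear_P]]
  by (metis dist_norm)

lemma P_in_Y: "j \<in> \<Gamma> \<Longrightarrow> P j x \<in> Y j"
  using range_P by blast

lemma zero_in_Y: "j \<in> \<Gamma> \<Longrightarrow> 0 \<in> Y j"
  using P_in_Y P_zero by metis

lemma P_on_Y: "j \<in> \<Gamma> \<Longrightarrow> y \<in> Y j \<Longrightarrow> P j y = y"
  using range_P P_idem by (metis rangeE)

lemma P_on_other_Y: "i \<in> \<Gamma> \<Longrightarrow> j \<in> \<Gamma> \<Longrightarrow> i \<noteq> j \<Longrightarrow> y \<in> Y i \<Longrightarrow> P j y = 0"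
  using range_P P_orth by (metis rangeE)


definition sup_proj :: "'j set \<Rightarrow> 'a \<Rightarrow> real" where
  "sup_proj A x = Sup (insert 0 ((\<lambda>i. norm (P i x)) ` A))"

lemma sup_proj_bdd_above: "A \<subseteq> \<Gamma> \<Longrightarrow> bdd_above (insert 0 ((\<lambda>i. norm (P i x)) ` A))"
  by (rule bdd_aboveI[of _ "K * norm x"]) (use norm_P_le K_ge_1 in auto)

lemma norm_P_le_sup_proj: "A \<subseteq> \<Gamma> \<Longrightarrow> i \<in> A \<Longrightarrow> norm (P i x) \<le> sup_proj A x"
  unfolding sup_proj_def by (rule cSup_upper[OF _ sup_proj_bdd_above]) auto

lemma sup_proj_nonneg: "A \<subseteq> \<Gamma> \<Longrightarrow> 0 \<le> sup_proj A x"
  unfolding sup_proj_def by (rule cSup_upper[OF _ sup_proj_bdd_above]) auto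

lemma sup_proj_le: "A \<subseteq> \<Gamma> \<Longrightarrow> sup_proj A x \<le> sup_proj A y + K * dist x y"
  unfolding sup_proj_def[of A x]
proof (rule cSup_least)
  assume A: "A \<subseteq> \<Gamma>"
  fix s assume "s \<in> insert 0 ((\<lambda>i. norm (P i x)) ` A)"
  then consider "s = 0" | i where "i \<in> A" "s = norm (P i x)" by blast
  then show "s \<le> sup_proj A y + K * dist x y"
  proof cases
    case 1
    then show ?thesis using sup_proj_nonneg[OF A, of y] K_ge_1 by simp
  next
    case 2
    have "norm (P i x) \<le> norm (P i y) + dist (P i x) (P i y)"
      by (simp add: dist_norm norm_triangle_sub)
    also have "\<dots> \<le> sup_proj A y + K * dist x y"
      using norm_P_le_sup_proj[OF A 2(1), of y] dist_P_le[of i x y] 2 A by auto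
    finally show ?thesis using 2 by simp
  qed
qed simp

lemma sup_proj_lipschitz: "A \<subseteq> \<Gamma> \<Longrightarrow> K-lipschitz_on UNIV (sup_proj A)"
proof (rule lipschitz_onI)
  fix x y assume A: "A \<subseteq> \<Gamma>"
  show "dist (sup_proj A x) (sup_proj A y) \<le> K * dist x y"
    using sup_proj_le[OF A, of x y] sup_proj_le[OF A, of y x]
    by (simp add: dist_real_def abs_le_iff dist_commute)
qed (use K_ge_1 in simp)

definition pnorm :: "'a \<Rightarrow> real" where "pnorm = sup_proj \<Gamma>"

definition weight :: "'j \<Rightarrow> 'a \<Rightarrow> real" where
  "weight j x = max 0 (norm (P j x) - sup_proj (\<Gamma> - {j}) x)"

lemma weight_nonneg: "0 \<le> weight j x"
  unfolding weight_def by simp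

lemma weight_le_pnorm: "j \<in> \<Gamma> \<Longrightarrow> weight j x \<le> pnorm x"
  unfolding weight_def pnorm_def
  using norm_P_le_sup_proj[of \<Gamma> j x] sup_proj_nonneg[of \<Gamma> x] sup_proj_nonneg[of "\<Gamma> - {j}" x] by auto

lemma weight_lipschitz: "j \<in> \<Gamma> \<Longrightarrow> (2 * K)-lipschitz_on UNIV (weight j)"
proof -
  assume j: "j \<in> \<Gamma>"
  have "K-lipschitz_on UNIV (\<lambda>x. norm (P j x))"
    using dist_P_le[OF j] K_ge_1
    by (intro lipschitz_onI)
       (auto simp: dist_real_def dist_norm intro: order_trans[OF norm_triangle_ineq3])
  moreover have "K-lipschitz_on UNIV (sup_proj (\<Gamma> - {j}))" by (rule sup_proj_lipschitz) auto
  ultimately have "(K + K)-lipschitz_on UNIV (\<lambda>x. norm (P j x) - sup_proj (\<Gamma> - {j}) x)"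
    by (rule lipschitz_on_diff)
  then have "(K + K)-lipschitz_on UNIV (\<lambda>x. max 0 (norm (P j x) - sup_proj (\<Gamma> - {j}) x))"
    by (rule lipschitz_on_pos_part)
  then show ?thesis unfolding weight_def[abs_def] by simp
qed

lemma weight_pos_unique: "i \<in> \<Gamma> \<Longrightarrow> j \<in> \<Gamma> \<Longrightarrow> weight i x > 0 \<Longrightarrow> weight j x > 0 \<Longrightarrow> i = j"
proof (rule ccontr)
  assume ij: "i \<in> \<Gamma>" "j \<in> \<Gamma>" "weight i x > 0" "weight j x > 0" "i \<noteq> j"
  then have "norm (P i x) > sup_proj (\<Gamma> - {i}) x" "norm (P j x) > sup_proj (\<Gamma> - {j}) x"
    unfolding weight_def by auto
  moreover have "norm (P j x) \<le> sup_proj (\<Gamma> - {i}) x" "norm (P i x) \<le> sup_proj (\<Gamma> - {j}) x"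
    using ij by (auto intro!: norm_P_le_sup_proj)
  ultimately show False by linarith
qed

lemma card_weight_pos_le_1:
  assumes "finite F" "F \<subseteq> \<Gamma>"
  shows "card {j\<in>F. weight j x > 0} \<le> 1"
proof -
  have "finite {j\<in>F. weight j x > 0}" using assms(1) by simp
  moreover have "\<forall>a\<in>{j\<in>F. weight j x > 0}. \<forall>b\<in>{j\<in>F. weight j x > 0}. a = b"
    using weight_pos_unique assms(2) by blast
  ultimately have "card {j\<in>F. weight j x > 0} \<le> Suc 0" using card_le_Suc0_iff_eq by blast
  then show ?thesis by simp
qed

lemma pnorm_weight_on_Y:
  assumes j: "j \<in> \<Gamma>" and y: "y \<in> Y j"
  shows "pnorm y = norm y" "weight j y = norm y"
proof -
  have other: "norm (P i y) = 0" if "i \<in> \<Gamma>" "i \<noteq> j" for i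
    using P_on_other_Y[OF j that(1)] that(2) y by auto
  then have only_zero: "insert 0 ((\<lambda>i. norm (P i y)) ` (\<Gamma> - {j})) = {0}" by force
  have off: "sup_proj (\<Gamma> - {j}) y = 0" unfolding sup_proj_def only_zero by simp
  have "norm (P i y) \<in> {0, norm y}" if "i \<in> \<Gamma>" for i
    using other[OF that] P_on_Y[OF j y] by (cases "i = j") auto
  then have "(\<lambda>i. norm (P i y)) ` \<Gamma> \<subseteq> {0, norm y}" by blast
  moreover have "norm y \<in> (\<lambda>i. norm (P i y)) ` \<Gamma>" using P_on_Y[OF j y] j by (metis image_eqI)
  ultimately have "insert 0 ((\<lambda>i. norm (P i y)) ` \<Gamma>) = {0, norm y}" by blast
  moreover have "Sup {0, norm y} = norm y" by (rule cSup_eq_maximum) auto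
  ultimately show "pnorm y = norm y" unfolding pnorm_def sup_proj_def by simp
  show "weight j y = norm y" using off P_on_Y[OF j y] unfolding weight_def by simp
qed

definition extension :: "'j \<Rightarrow> ('a \<Rightarrow> real) \<Rightarrow> 'a \<Rightarrow> real" where
  "extension j g = (\<lambda>x. g (P j x) * weight j x / pnorm x)"

lemma extension_lipschitz:
  assumes j: "j \<in> \<Gamma>" and g: "g \<in> Lip0 (Y j) 0"
  shows "(4 * K * lipconst (Y j) g)-lipschitz_on UNIV (extension j g)"
proof -
  define L where "L = lipconst (Y j) g"
  have gl: "L-lipschitz_on (Y j) g" using Lip0_lipschitz_on[OF g] L_def by simp
  have L0: "0 \<le> L" using lipschitz_on_nonneg[OF gl] .
  have bound: "\<bar>g (P j x)\<bar> \<le> L * pnorm x" for x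
  proof -
    have "\<bar>g (P j x)\<bar> \<le> L * norm (P j x)"
      using Lip0_abs_le[OF g P_in_Y[OF j] zero_in_Y[OF j]] L_def by simp
    also have "\<dots> \<le> L * pnorm x"
      unfolding pnorm_def using norm_P_le_sup_proj[of \<Gamma> j x] j L0 by (simp add: mult_left_mono)
    finally show ?thesis .
  qed
  have lip_g_P: "(L * K)-lipschitz_on UNIV (\<lambda>x. g (P j x))"
  proof (rule lipschitz_onI)
    fix x y :: 'a
    have "dist (g (P j x)) (g (P j y)) \<le> L * dist (P j x) (P j y)"
      using lipschitz_onD[OF gl P_in_Y[OF j] P_in_Y[OF j]] .
    also have "\<dots> \<le> L * (K * dist x y)" using dist_P_le[OF j, of x y] L0 by (simp add: mult_left_mono)
    finally show "dist (g (P j x)) (g (P j y)) \<le> L * K * dist x y" by simp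
  qed (use L0 K_ge_1 in simp)
  have lip_pnorm: "K-lipschitz_on UNIV pnorm" unfolding pnorm_def by (rule sup_proj_lipschitz) simp
  have "(L * K + L * (2 * K + K))-lipschitz_on UNIV (extension j g)"
    unfolding extension_def
    by (rule lipschitz_on_mult_divide[OF bound _ lip_g_P weight_lipschitz[OF j] lip_pnorm L0])
       (use weight_nonneg weight_le_pnorm[OF j] in auto)
  then show ?thesis unfolding L_def by (simp add: algebra_simps)
qed

lemma extension_Lip0:
  assumes j: "j \<in> \<Gamma>" and g: "g \<in> Lip0 (Y j) 0"
  shows "extension j g \<in> Lip0 UNIV 0" "lipconst UNIV (extension j g) \<le> 4 * K * lipconst (Y j) g"
  using extension_lipschitz[OF assms] P_zero[OF j] Lip0_base[OF g]
  by (auto simp: Lip0_def extension_def intro: lipconst_le)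

lemma extension_add: "extension j (\<lambda>x. g x + h x) = (\<lambda>x. extension j g x + extension j h x)"
  unfolding extension_def by (simp add: add_divide_distrib ring_distribs)

lemma extension_cmult: "extension j (\<lambda>x. c * g x) = (\<lambda>x. c * extension j g x)"
  unfolding extension_def by (simp add: algebra_simps)

lemma zero_outside_extension:
  assumes i: "i \<in> \<Gamma>" and j: "j \<in> \<Gamma>" and g: "g \<in> Lip0 (Y j) 0"
  shows "zero_outside (Y i) (extension j g) = (if i = j then g else (\<lambda>x. 0))"
proof
  fix y
  have "extension j g y = g y" if "i = j" "y \<in> Y i"
    using that pnorm_weight_on_Y[OF j] P_on_Y[OF j] Lip0_base[OF g]
    by (cases "y = 0") (auto simp: extension_def)
  moreover have "extension j g y = 0" if "i \<noteq> j" "y \<in> Y i"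
    using that P_on_other_Y[OF i j] Lip0_base[OF g] by (simp add: extension_def)
  moreover have "g y = 0" if "y \<notin> Y j"
    using that g by (simp add: Lip0_def)
  ultimately show "zero_outside (Y i) (extension j g) y = (if i = j then g else (\<lambda>x. 0)) y"
    by (auto simp: zero_outside_def)
qed

text \<open>Each point lies in the support of at most one weight, so a sum of extensions changes,
  between two points, in at most two of its terms.\<close>

lemma sum_extension_lipschitz:
  assumes fin: "finite F" and F: "F \<subseteq> \<Gamma>"
    and g: "\<And>j. j \<in> F \<Longrightarrow> g j \<in> Lip0 (Y j) 0 \<and> lipconst (Y j) (g j) \<le> 1"
  shows "(8 * K)-lipschitz_on UNIV (\<lambda>x. \<Sum>j\<in>F. extension j (g j) x)"
proof (rule lipschitz_onI)
  have each: "(4 * K)-lipschitz_on UNIV (extension j (g j))" if j: "j \<in> F" for j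
    using g[OF j] j F K_ge_1 by (intro lipschitz_on_le[OF extension_lipschitz]) auto
  fix x y :: 'a
  define A where "A = {j\<in>F. weight j x > 0} \<union> {j\<in>F. weight j y > 0}"
  have AF: "A \<subseteq> F" unfolding A_def by auto
  have card_A: "card A \<le> 2"
    using card_Un_le[of "{j\<in>F. weight j x > 0}" "{j\<in>F. weight j y > 0}"]
      card_weight_pos_le_1[OF fin F, of x] card_weight_pos_le_1[OF fin F, of y]
    unfolding A_def by linarith
  have "(\<Sum>j\<in>F. extension j (g j) x) - (\<Sum>j\<in>F. extension j (g j) y)
      = (\<Sum>j\<in>F. extension j (g j) x - extension j (g j) y)"
    by (simp add: sum_subtractf)
  also have "\<dots> = (\<Sum>j\<in>A. extension j (g j) x - extension j (g j) y)"
  proof (intro sum.mono_neutral_right[OF fin AF] ballI)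
    fix i assume "i \<in> F - A"
    then have "weight i x = 0" "weight i y = 0"
      unfolding A_def using weight_nonneg[of i x] weight_nonneg[of i y] by auto
    then show "extension i (g i) x - extension i (g i) y = 0" by (simp add: extension_def)
  qed
  finally have "dist (\<Sum>j\<in>F. extension j (g j) x) (\<Sum>j\<in>F. extension j (g j) y)
      \<le> (\<Sum>j\<in>A. \<bar>extension j (g j) x - extension j (g j) y\<bar>)"
    by (simp add: dist_real_def sum_abs)
  also have "\<dots> \<le> (\<Sum>j\<in>A. 4 * K * dist x y)"
    using lipschitz_onD[OF each] AF by (intro sum_mono) (force simp: dist_real_def)
  also have "\<dots> \<le> 2 * (4 * K * dist x y)"
    using card_A K_ge_1 by (simp add: mult_right_mono)
  finally show "dist (\<Sum>j\<in>F. extension j (g j) x) (\<Sum>j\<in>F. extension j (g j) y) \<le> 8 * K * dist x y"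
    by simp
qed (use K_ge_1 in simp)

definition embed :: "('j \<Rightarrow> ('a \<Rightarrow> real) \<Rightarrow> real) \<Rightarrow> ('a \<Rightarrow> real) \<Rightarrow> real" where
  "embed u = (\<lambda>f. if f \<in> Lip0 UNIV 0 then infsum (\<lambda>j. u j (zero_outside (Y j) f)) \<Gamma> else 0)"

lemma embed_term_bound:
  assumes u: "u \<in> l1_free_sum \<Gamma> Y" and f: "f \<in> Lip0 UNIV 0" and j: "j \<in> \<Gamma>"
  shows "\<bar>u j (zero_outside (Y j) f)\<bar> \<le> lipconst UNIV f * dualnorm (Y j) 0 (u j)"
proof -
  have "\<bar>u j (zero_outside (Y j) f)\<bar> \<le> dualnorm (Y j) 0 (u j) * lipconst (Y j) (zero_outside (Y j) f)"
    by (rule Lip0_dual_bound[OF l1_free_sum_Lip0_dual[OF u j]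
          zero_outside_Lip0(1)[OF f zero_in_Y[OF j]]])
  also have "\<dots> \<le> dualnorm (Y j) 0 (u j) * lipconst UNIV f"
    by (rule mult_left_mono[OF zero_outside_Lip0(2)[OF f zero_in_Y[OF j]]
          dualnorm_nonneg[OF l1_free_sum_Lip0_dual[OF u j]]])
  finally show ?thesis by (simp add: mult.commute)
qed

lemma embed_abs_summable:
  assumes u: "u \<in> l1_free_sum \<Gamma> Y" and f: "f \<in> Lip0 UNIV 0"
  shows "(\<lambda>j. \<bar>u j (zero_outside (Y j) f)\<bar>) summable_on \<Gamma>"
  by (rule summable_on_comparison_test[OF summable_on_cmult_right[OF l1_free_sum_summable[OF u]]])
     (use embed_term_bound[OF u f] in auto)

lemma embed_summable:
  assumes u: "u \<in> l1_free_sum \<Gamma> Y" and f: "f \<in> Lip0 UNIV 0"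
  shows "(\<lambda>j. u j (zero_outside (Y j) f)) summable_on \<Gamma>"
  using embed_abs_summable[OF assms] summable_on_iff_abs_summable_on_real by fastforce

lemma embed_bound:
  assumes u: "u \<in> l1_free_sum \<Gamma> Y" and f: "f \<in> Lip0 UNIV 0"
  shows "\<bar>embed u f\<bar> \<le> l1_norm \<Gamma> Y u * lipconst UNIV f"
proof -
  have "\<bar>embed u f\<bar> = norm (infsum (\<lambda>j. u j (zero_outside (Y j) f)) \<Gamma>)" using f by (simp add: embed_def)
  also have "\<dots> \<le> infsum (\<lambda>j. \<bar>u j (zero_outside (Y j) f)\<bar>) \<Gamma>"
    using norm_infsum_bound[of "\<lambda>j. u j (zero_outside (Y j) f)" \<Gamma>] embed_abs_summable[OF u f] by simp
  also have "\<dots> \<le> infsum (\<lambda>j. lipconst UNIV f * dualnorm (Y j) 0 (u j)) \<Gamma>"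
    by (rule infsum_mono)
       (use embed_abs_summable[OF u f] summable_on_cmult_right[OF l1_free_sum_summable[OF u]]
         embed_term_bound[OF u f] in auto)
  also have "\<dots> = lipconst UNIV f * l1_norm \<Gamma> Y u"
    unfolding l1_norm_def by (rule infsum_cmult_right')
  finally show ?thesis by (simp add: mult.commute)
qed

lemma embed_Lip0_dual:
  assumes u: "u \<in> l1_free_sum \<Gamma> Y"
  shows "embed u \<in> Lip0_dual UNIV 0"
proof (rule Lip0_dualI[OF _ _ _ embed_bound[OF u]])
  fix f g :: "'a \<Rightarrow> real" assume f: "f \<in> Lip0 UNIV 0" and g: "g \<in> Lip0 UNIV 0"
  have "infsum (\<lambda>j. u j (zero_outside (Y j) (\<lambda>x. f x + g x))) \<Gamma>
      = infsum (\<lambda>j. u j (zero_outside (Y j) f) + u j (zero_outside (Y j) g)) \<Gamma>"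
    using Lip0_dual_add[OF l1_free_sum_Lip0_dual[OF u]
        zero_outside_Lip0(1)[OF f zero_in_Y] zero_outside_Lip0(1)[OF g zero_in_Y]]
    by (intro infsum_cong) (simp add: zero_outside_add)
  also have "\<dots> = infsum (\<lambda>j. u j (zero_outside (Y j) f)) \<Gamma> + infsum (\<lambda>j. u j (zero_outside (Y j) g)) \<Gamma>"
    by (rule infsum_add[OF embed_summable[OF u f] embed_summable[OF u g]])
  finally show "embed u (\<lambda>x. f x + g x) = embed u f + embed u g"
    using f g Lip0_add[OF f g] by (simp add: embed_def)
next
  fix c and f :: "'a \<Rightarrow> real" assume f: "f \<in> Lip0 UNIV 0"
  have "infsum (\<lambda>j. u j (zero_outside (Y j) (\<lambda>x. c * f x))) \<Gamma>
      = infsum (\<lambda>j. c * u j (zero_outside (Y j) f)) \<Gamma>"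
    using Lip0_dual_cmult[OF l1_free_sum_Lip0_dual[OF u] zero_outside_Lip0(1)[OF f zero_in_Y]]
    by (intro infsum_cong) (simp add: zero_outside_cmult)
  also have "\<dots> = c * infsum (\<lambda>j. u j (zero_outside (Y j) f)) \<Gamma>" by (rule infsum_cmult_right')
  finally show "embed u (\<lambda>x. c * f x) = c * embed u f"
    using f Lip0_cmult[OF f] by (simp add: embed_def)
qed (simp add: embed_def)

lemma embed_norm_le: "u \<in> l1_free_sum \<Gamma> Y \<Longrightarrow> dualnorm UNIV 0 (embed u) \<le> l1_norm \<Gamma> Y u"
  by (rule dualnorm_le[OF embed_bound l1_norm_nonneg])

lemma embed_ladd:
  assumes u: "u \<in> l1_free_sum \<Gamma> Y" and u': "u' \<in> l1_free_sum \<Gamma> Y"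
  shows "embed (ladd u u') = fadd (embed u) (embed u')"
  using infsum_add[OF embed_summable[OF u] embed_summable[OF u']]
  by (auto simp: embed_def fadd_def ladd_def fun_eq_iff)

lemma embed_lscale: "embed (lscale c u) = fscale c (embed u)"
  by (simp add: embed_def fscale_def lscale_def infsum_cmult_right' fun_eq_iff)

definition coords :: "(('a \<Rightarrow> real) \<Rightarrow> real) \<Rightarrow> 'j \<Rightarrow> ('a \<Rightarrow> real) \<Rightarrow> real" where
  "coords v = (\<lambda>j. if j \<in> \<Gamma> then (\<lambda>g. if g \<in> Lip0 (Y j) 0 then v (extension j g) else 0) else (\<lambda>g. 0))"

lemma coords_bound:
  assumes v: "v \<in> Lip0_dual UNIV 0" and j: "j \<in> \<Gamma>" and g: "g \<in> Lip0 (Y j) 0"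
  shows "\<bar>coords v j g\<bar> \<le> (4 * K * dualnorm UNIV 0 v) * lipconst (Y j) g"
proof -
  have "\<bar>coords v j g\<bar> = \<bar>v (extension j g)\<bar>" using j g by (simp add: coords_def)
  also have "\<dots> \<le> dualnorm UNIV 0 v * lipconst UNIV (extension j g)"
    by (rule Lip0_dual_bound[OF v extension_Lip0(1)[OF j g]])
  also have "\<dots> \<le> dualnorm UNIV 0 v * (4 * K * lipconst (Y j) g)"
    by (rule mult_left_mono[OF extension_Lip0(2)[OF j g] dualnorm_nonneg[OF v]])
  finally show ?thesis by (simp add: algebra_simps)
qed

lemma coords_Lip0_dual:
  assumes v: "v \<in> Lip0_dual UNIV 0" and j: "j \<in> \<Gamma>"
  shows "coords v j \<in> Lip0_dual (Y j) 0"
proof (rule Lip0_dualI[OF _ _ _ coords_bound[OF v j]])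
  fix f g :: "'a \<Rightarrow> real" assume f: "f \<in> Lip0 (Y j) 0" and g: "g \<in> Lip0 (Y j) 0"
  show "coords v j (\<lambda>x. f x + g x) = coords v j f + coords v j g"
    using f g Lip0_add[OF f g] j
    by (simp add: coords_def extension_add
        Lip0_dual_add[OF v extension_Lip0(1)[OF j f] extension_Lip0(1)[OF j g]])
next
  fix c and f :: "'a \<Rightarrow> real" assume f: "f \<in> Lip0 (Y j) 0"
  show "coords v j (\<lambda>x. c * f x) = c * coords v j f"
    using f Lip0_cmult[OF f] j
    by (simp add: coords_def extension_cmult Lip0_dual_cmult[OF v extension_Lip0(1)[OF j f]])
qed (use j in \<open>simp add: coords_def\<close>)

lemma sum_dualnorm_coords_le:
  assumes v: "v \<in> Lip0_dual UNIV 0" and fin: "finite F" and F: "F \<subseteq> \<Gamma>"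
  shows "(\<Sum>j\<in>F. dualnorm (Y j) 0 (coords v j)) \<le> 8 * K * dualnorm UNIV 0 v"
proof (rule field_le_epsilon)
  fix e :: real assume e: "0 < e"
  define \<delta> where "\<delta> = e / (real (card F) + 1)"
  have \<delta>: "\<delta> > 0" "real (card F) * \<delta> \<le> e" using e by (simp_all add: \<delta>_def field_simps)
  have "\<forall>j\<in>F. \<exists>g. g \<in> Lip0 (Y j) 0 \<and> lipconst (Y j) g \<le> 1 \<and>
      dualnorm (Y j) 0 (coords v j) - \<delta> \<le> coords v j g"
    using dualnorm_approx[OF coords_Lip0_dual[OF v] \<delta>(1)] F by (metis subsetD)
  then obtain g where g: "\<And>j. j \<in> F \<Longrightarrow> g j \<in> Lip0 (Y j) 0 \<and> lipconst (Y j) (g j) \<le> 1 \<and>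
      dualnorm (Y j) 0 (coords v j) - \<delta> \<le> coords v j (g j)"
    by metis
  define h where "h = (\<lambda>x. \<Sum>j\<in>F. extension j (g j) x)"
  have extension_g: "extension j (g j) \<in> Lip0 UNIV 0" if "j \<in> F" for j
    using extension_Lip0(1) g that F by blast
  have h: "h \<in> Lip0 UNIV 0" unfolding h_def by (rule Lip0_sum[OF fin extension_g])
  have lip_h: "lipconst UNIV h \<le> 8 * K"
    unfolding h_def by (rule lipconst_le[OF sum_extension_lipschitz[OF fin F]]) (use g in blast)
  have "(\<Sum>j\<in>F. dualnorm (Y j) 0 (coords v j)) \<le> (\<Sum>j\<in>F. coords v j (g j) + \<delta>)"
    by (rule sum_mono) (use g in force)
  also have "\<dots> = (\<Sum>j\<in>F. v (extension j (g j))) + real (card F) * \<delta>"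
    using F g by (simp add: sum.distrib coords_def subset_iff)
  also have "(\<Sum>j\<in>F. v (extension j (g j))) = v h"
    unfolding h_def by (rule Lip0_dual_sum[OF v fin extension_g, symmetric])
  also have "v h \<le> dualnorm UNIV 0 v * lipconst UNIV h" using Lip0_dual_bound[OF v h] by linarith
  also have "\<dots> \<le> dualnorm UNIV 0 v * (8 * K)" by (rule mult_left_mono[OF lip_h dualnorm_nonneg[OF v]])
  finally show "(\<Sum>j\<in>F. dualnorm (Y j) 0 (coords v j)) \<le> 8 * K * dualnorm UNIV 0 v + e"
    using \<delta>(2) by (simp add: algebra_simps)
qed

lemma coords_summable:
  "v \<in> Lip0_dual UNIV 0 \<Longrightarrow> (\<lambda>j. dualnorm (Y j) 0 (coords v j)) summable_on \<Gamma>"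
  by (rule nonneg_bdd_above_summable_on)
     (use dualnorm_nonneg[OF coords_Lip0_dual] sum_dualnorm_coords_le
       in \<open>auto intro!: bdd_aboveI2[of _ _ "8 * K * dualnorm UNIV 0 v"]\<close>)

lemma coords_embed:
  assumes u: "u \<in> l1_free_sum \<Gamma> Y"
  shows "coords (embed u) = u"
proof (intro ext)
  fix j g
  show "coords (embed u) j g = u j g"
  proof (cases "j \<in> \<Gamma> \<and> g \<in> Lip0 (Y j) 0")
    case False
    then show ?thesis
      using l1_free_sum_outside[OF u] Lip0_dual_outside[OF l1_free_sum_Lip0_dual[OF u]]
      by (auto simp: coords_def)
  next
    case True
    then have j: "j \<in> \<Gamma>" and g: "g \<in> Lip0 (Y j) 0" by auto
    have "infsum (\<lambda>i. u i (zero_outside (Y i) (extension j g))) \<Gamma>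
        = infsum (\<lambda>i. u i (zero_outside (Y i) (extension j g))) {j}"
      using zero_outside_extension[OF _ j g] Lip0_dual_zero[OF l1_free_sum_Lip0_dual[OF u]] j
      by (intro infsum_cong_neutral) auto
    also have "\<dots> = u j g" using zero_outside_extension[OF j j g] by simp
    finally show ?thesis using j g extension_Lip0(1)[OF j g] by (simp add: coords_def embed_def)
  qed
qed

lemma coords_molecule:
  assumes m: "m \<in> molecules UNIV 0" and j: "j \<in> \<Gamma>"
  obtains m' where "m' \<in> molecules (Y j) 0" "\<And>g. coords m j g = m' g"
proof -
  obtain S a where S: "finite S" "m = (\<lambda>f. \<Sum>x\<in>S. a x * delta UNIV 0 x f)"
    using m unfolding molecules_def by blast
  define b where "b y = (\<Sum>x\<in>{x\<in>S. P j x = y}. a x * (weight j x / pnorm x))" for y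
  show ?thesis
  proof (rule that)
    show "(\<lambda>g. \<Sum>y\<in>P j ` S. b y * delta (Y j) 0 y g) \<in> molecules (Y j) 0"
      unfolding molecules_def using S(1) P_in_Y[OF j] by blast
  next
    fix g
    show "coords m j g = (\<Sum>y\<in>P j ` S. b y * delta (Y j) 0 y g)"
    proof (cases "g \<in> Lip0 (Y j) 0")
      case True
      have "(\<Sum>y\<in>P j ` S. b y * g y)
          = (\<Sum>y\<in>P j ` S. \<Sum>x\<in>{x\<in>S. P j x = y}. a x * (weight j x / pnorm x) * g (P j x))"
        unfolding b_def by (rule sum.cong) (auto simp: sum_distrib_right)
      also have "\<dots> = (\<Sum>x\<in>S. a x * (weight j x / pnorm x) * g (P j x))"
        by (rule sum.image_gen[OF S(1), symmetric])
      also have "\<dots> = m (extension j g)"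
        using S extension_Lip0(1)[OF j True] by (simp add: delta_def extension_def algebra_simps)
      finally show ?thesis using True j by (simp add: coords_def delta_def)
    qed (use j in \<open>simp add: coords_def delta_def\<close>)
  qed
qed

lemma coords_diff:
  "j \<in> \<Gamma> \<Longrightarrow> g \<in> Lip0 (Y j) 0 \<Longrightarrow> coords v j g - coords w j g = coords (\<lambda>f. v f - w f) j g"
  by (simp add: coords_def)

lemma coords_free_space:
  assumes v: "v \<in> free_space UNIV 0" and j: "j \<in> \<Gamma>"
  shows "coords v j \<in> free_space (Y j) 0"
proof -
  have vd: "v \<in> Lip0_dual UNIV 0" by (rule free_space_Lip0_dual[OF v])
  have "\<exists>m'\<in>molecules (Y j) 0. dualnorm (Y j) 0 (\<lambda>g. coords v j g - m' g) < \<epsilon>" if "\<epsilon> > 0" for \<epsilon>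
  proof -
    have "\<epsilon> / (4 * K) > 0" using \<open>\<epsilon> > 0\<close> K_ge_1 by simp
    then obtain m where m: "m \<in> molecules UNIV 0" and vm: "dualnorm UNIV 0 (\<lambda>f. v f - m f) < \<epsilon> / (4 * K)"
      using v unfolding free_space_def by blast
    obtain m' where m': "m' \<in> molecules (Y j) 0" "\<And>g. coords m j g = m' g"
      using coords_molecule[OF m j] by blast
    have d: "(\<lambda>f. v f - m f) \<in> Lip0_dual UNIV 0"
      by (rule Lip0_dual_diff[OF vd molecules_Lip0_dual[OF m]]) simp
    have "(\<lambda>g. coords v j g - m' g) = coords (\<lambda>f. v f - m f) j"
      using coords_diff[OF j] m'(2)[symmetric] by (auto simp: coords_def fun_eq_iff)
    moreover have "dualnorm (Y j) 0 (coords (\<lambda>f. v f - m f) j) \<le> 4 * K * dualnorm UNIV 0 (\<lambda>f. v f - m f)"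
      using coords_bound[OF d j] K_ge_1 dualnorm_nonneg[OF d] by (intro dualnorm_le) auto
    moreover have "4 * K * dualnorm UNIV 0 (\<lambda>f. v f - m f) < \<epsilon>"
      using vm K_ge_1 by (simp add: field_simps)
    ultimately have "dualnorm (Y j) 0 (\<lambda>g. coords v j g - m' g) < \<epsilon>" by simp
    then show ?thesis using m'(1) by blast
  qed
  then show ?thesis unfolding free_space_def using coords_Lip0_dual[OF vd j] by blast
qed

lemma coords_in_l1_free_sum: "v \<in> free_space UNIV 0 \<Longrightarrow> coords v \<in> l1_free_sum \<Gamma> Y"
  unfolding l1_free_sum_def using coords_free_space coords_summable[OF free_space_Lip0_dual]
  by (auto simp: coords_def)

lemma l1_norm_coords_le: "v \<in> free_space UNIV 0 \<Longrightarrow> l1_norm \<Gamma> Y (coords v) \<le> 8 * K * dualnorm UNIV 0 v"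
  unfolding l1_norm_def
  by (rule infsum_le_finite_sums[OF coords_summable[OF free_space_Lip0_dual]])
     (use sum_dualnorm_coords_le[OF free_space_Lip0_dual] in auto)

lemma coords_fadd: "coords (fadd v v') = ladd (coords v) (coords v')"
  by (intro ext) (simp add: coords_def ladd_def fadd_def)

lemma coords_fscale: "coords (fscale c v) = lscale c (coords v)"
  by (intro ext) (simp add: coords_def lscale_def fscale_def)

lemma embed_split:
  assumes u: "u \<in> l1_free_sum \<Gamma> Y" and f: "f \<in> Lip0 UNIV 0" and F: "finite F" "F \<subseteq> \<Gamma>"
  shows "embed u f
    = (\<Sum>j\<in>F. u j (zero_outside (Y j) f)) + infsum (\<lambda>j. u j (zero_outside (Y j) f)) (\<Gamma> - F)"
  using infsum_Diff[OF embed_summable[OF u f] summable_on_finite[OF F(1)] F(2)] F(1) f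
  by (simp add: embed_def)

lemma embed_tail_bound:
  assumes u: "u \<in> l1_free_sum \<Gamma> Y" and f: "f \<in> Lip0 UNIV 0" and F: "finite F"
  shows "\<bar>infsum (\<lambda>j. u j (zero_outside (Y j) f)) (\<Gamma> - F)\<bar>
      \<le> lipconst UNIV f * infsum (\<lambda>j. dualnorm (Y j) 0 (u j)) (\<Gamma> - F)"
proof -
  have abs_summable: "(\<lambda>j. \<bar>u j (zero_outside (Y j) f)\<bar>) summable_on (\<Gamma> - F)"
    by (rule summable_on_subset_banach[OF embed_abs_summable[OF u f]]) auto
  have "\<bar>infsum (\<lambda>j. u j (zero_outside (Y j) f)) (\<Gamma> - F)\<bar>
      \<le> infsum (\<lambda>j. \<bar>u j (zero_outside (Y j) f)\<bar>) (\<Gamma> - F)"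
    using norm_infsum_bound[of "\<lambda>j. u j (zero_outside (Y j) f)" "\<Gamma> - F"] abs_summable by simp
  also have "\<dots> \<le> infsum (\<lambda>j. lipconst UNIV f * dualnorm (Y j) 0 (u j)) (\<Gamma> - F)"
    by (rule infsum_mono)
       (use abs_summable
          summable_on_cmult_right[OF summable_on_cofin_subset[OF l1_free_sum_summable[OF u] F]]
         embed_term_bound[OF u f] in auto)
  also have "\<dots> = lipconst UNIV f * infsum (\<lambda>j. dualnorm (Y j) 0 (u j)) (\<Gamma> - F)"
    by (rule infsum_cmult_right')
  finally show ?thesis .
qed

text \<open>Truncate \<open>u\<close> to finitely many coordinates and approximate these by molecules;
  the glued molecule is then close to \<open>embed u\<close>.\<close>

lemma embed_free_space:
  assumes u: "u \<in> l1_free_sum \<Gamma> Y"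
  shows "embed u \<in> free_space UNIV 0"
proof -
  have "\<exists>m\<in>molecules UNIV 0. dualnorm UNIV 0 (\<lambda>f. embed u f - m f) < \<epsilon>" if "\<epsilon> > 0" for \<epsilon>
  proof -
    obtain F where F: "finite F" "F \<subseteq> \<Gamma>"
      and tail: "\<bar>infsum (\<lambda>j. dualnorm (Y j) 0 (u j)) (\<Gamma> - F)\<bar> \<le> \<epsilon> / 3"
      using infsum_tail_small[OF l1_free_sum_summable[OF u], of "\<epsilon> / 3"] \<open>\<epsilon> > 0\<close> by auto
    define \<eta> where "\<eta> = \<epsilon> / (3 * (real (card F) + 1))"
    have \<eta>: "\<eta> > 0" "real (card F) * \<eta> \<le> \<epsilon> / 3" using \<open>\<epsilon> > 0\<close> by (simp_all add: \<eta>_def field_simps)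
    have "\<exists>m. m \<in> molecules (Y j) 0 \<and> dualnorm (Y j) 0 (\<lambda>g. u j g - m g) < \<eta>" if "j \<in> F" for j
    proof -
      have "u j \<in> free_space (Y j) 0" using l1_free_sum_free_space[OF u] that F(2) by blast
      then show ?thesis using \<eta>(1) unfolding free_space_def by blast
    qed
    then obtain mj where mj: "\<And>j. j \<in> F \<Longrightarrow> mj j \<in> molecules (Y j) 0"
      and close: "\<And>j. j \<in> F \<Longrightarrow> dualnorm (Y j) 0 (\<lambda>g. u j g - mj j g) < \<eta>"
      by metis
    have zero_in_YF: "\<And>j. j \<in> F \<Longrightarrow> 0 \<in> Y j" using zero_in_Y F(2) by blast
    obtain m where m: "m \<in> molecules UNIV 0"
      and m_eq: "\<And>f. f \<in> Lip0 UNIV 0 \<Longrightarrow> m f = (\<Sum>j\<in>F. mj j (zero_outside (Y j) f))"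
      using molecules_glue[of F mj Y 0, OF F(1) mj zero_in_YF] by blast
    have head: "\<bar>u j (zero_outside (Y j) f) - mj j (zero_outside (Y j) f)\<bar> \<le> \<eta> * lipconst UNIV f"
      if j: "j \<in> F" and f: "f \<in> Lip0 UNIV 0" for j f
    proof -
      have jG: "j \<in> \<Gamma>" using j F(2) by auto
      have d: "(\<lambda>g. u j g - mj j g) \<in> Lip0_dual (Y j) 0"
        by (rule Lip0_dual_diff[OF l1_free_sum_Lip0_dual[OF u jG]
              molecules_Lip0_dual[OF mj[OF j] zero_in_Y[OF jG]]])
      have zf: "zero_outside (Y j) f \<in> Lip0 (Y j) 0"
          "lipconst (Y j) (zero_outside (Y j) f) \<le> lipconst UNIV f"
        using zero_outside_Lip0[OF f zero_in_Y[OF jG]] by auto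
      have "\<bar>u j (zero_outside (Y j) f) - mj j (zero_outside (Y j) f)\<bar>
          \<le> dualnorm (Y j) 0 (\<lambda>g. u j g - mj j g) * lipconst (Y j) (zero_outside (Y j) f)"
        using Lip0_dual_bound[OF d zf(1)] by simp
      also have "\<dots> \<le> \<eta> * lipconst UNIV f"
        using close[OF j] zf(2) Lip0_lipconst_nonneg[OF zf(1)] \<eta>(1) by (intro mult_mono) auto
      finally show ?thesis .
    qed
    have "\<bar>embed u f - m f\<bar> \<le> (2 * \<epsilon> / 3) * lipconst UNIV f" if f: "f \<in> Lip0 UNIV 0" for f
    proof -
      have L0: "0 \<le> lipconst UNIV f" by (rule Lip0_lipconst_nonneg[OF f])
      let ?err = "\<lambda>j. u j (zero_outside (Y j) f) - mj j (zero_outside (Y j) f)"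
      have "embed u f - m f = infsum (\<lambda>j. u j (zero_outside (Y j) f)) (\<Gamma> - F) + sum ?err F"
        unfolding embed_split[OF u f F] m_eq[OF f] sum_subtractf by simp
      then have "\<bar>embed u f - m f\<bar>
          \<le> \<bar>infsum (\<lambda>j. u j (zero_outside (Y j) f)) (\<Gamma> - F)\<bar> + (\<Sum>j\<in>F. \<bar>?err j\<bar>)"
        using sum_abs[of ?err F] by linarith
      also have "\<dots> \<le> lipconst UNIV f * (\<epsilon> / 3) + real (card F) * \<eta> * lipconst UNIV f"
      proof (rule add_mono)
        show "\<bar>infsum (\<lambda>j. u j (zero_outside (Y j) f)) (\<Gamma> - F)\<bar> \<le> lipconst UNIV f * (\<epsilon> / 3)"
          using embed_tail_bound[OF u f F(1)] mult_left_mono[OF order_trans[OF abs_ge_self tail] L0]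
          by linarith
        show "(\<Sum>j\<in>F. \<bar>?err j\<bar>) \<le> real (card F) * \<eta> * lipconst UNIV f"
          using sum_mono[of F "\<lambda>j. \<bar>?err j\<bar>" "\<lambda>_. \<eta> * lipconst UNIV f"] head[OF _ f] by simp
      qed
      also have "\<dots> \<le> (2 * \<epsilon> / 3) * lipconst UNIV f"
        using mult_right_mono[OF \<eta>(2) L0] by (simp add: algebra_simps)
      finally show ?thesis .
    qed
    then have "dualnorm UNIV 0 (\<lambda>f. embed u f - m f) \<le> 2 * \<epsilon> / 3"
      using \<open>\<epsilon> > 0\<close> by (intro dualnorm_le) auto
    then show ?thesis using m \<open>\<epsilon> > 0\<close> by force
  qed
  then show ?thesis unfolding free_space_def using embed_Lip0_dual[OF u] by blast
qed


lemma l1_norm_le_dualnorm_embed: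
  "u \<in> l1_free_sum \<Gamma> Y \<Longrightarrow> l1_norm \<Gamma> Y u \<le> 8 * K * dualnorm UNIV 0 (embed u)"
  using l1_norm_coords_le[OF embed_free_space] coords_embed by metis

lemma compl_embeds_l1_free_sum:
  "compl_embeds (l1_free_sum \<Gamma> Y) (l1_norm \<Gamma> Y) ladd lscale
     (free_space (UNIV::'a set) 0) (dualnorm UNIV 0) fadd fscale"
  unfolding compl_embeds_def
proof (intro exI[of _ embed] exI[of _ "\<lambda>v. embed (coords v)"] conjI ballI allI)
  show "\<exists>c>0. \<exists>C. \<forall>u\<in>l1_free_sum \<Gamma> Y.
      c * l1_norm \<Gamma> Y u \<le> dualnorm UNIV 0 (embed u) \<and> dualnorm UNIV 0 (embed u) \<le> C * l1_norm \<Gamma> Y u"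
    using l1_norm_le_dualnorm_embed embed_norm_le K_ge_1
    by (intro exI[of _ "1 / (8 * K)"] conjI exI[of _ 1]) (auto simp: field_simps)
  show "\<exists>C. \<forall>v\<in>free_space UNIV 0. dualnorm UNIV 0 (embed (coords v)) \<le> C * dualnorm UNIV 0 v"
    using order_trans[OF embed_norm_le[OF coords_in_l1_free_sum] l1_norm_coords_le] by blast
qed (simp_all add: embed_free_space embed_ladd embed_lscale coords_in_l1_free_sum coords_fadd
       coords_fscale coords_embed)

end

theorem mainTheorem8:
  fixes \<Gamma> :: "'j set" and Y :: "'j \<Rightarrow> 'a::banach set" and P :: "'j \<Rightarrow> 'a \<Rightarrow> 'a"
  assumes closed_sub: "\<And>j. j \<in> \<Gamma> \<Longrightarrow> closed (Y j) \<and> subspace (Y j)"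
    and bl: "\<And>j. j \<in> \<Gamma> \<Longrightarrow> bounded_linear (P j)"
    and proj: "\<And>j x. j \<in> \<Gamma> \<Longrightarrow> P j (P j x) = P j x"
    and range: "\<And>j. j \<in> \<Gamma> \<Longrightarrow> range (P j) = Y j"
    and orth: "\<And>i j x. i \<in> \<Gamma> \<Longrightarrow> j \<in> \<Gamma> \<Longrightarrow> i \<noteq> j \<Longrightarrow> P j (P i x) = 0"
    and c0: "\<And>x \<epsilon>. \<epsilon> > 0 \<Longrightarrow> finite {j \<in> \<Gamma>. \<epsilon> \<le> norm (P j x)}"
    and bdd: "\<exists>C. \<forall>x. \<forall>j\<in>\<Gamma>. norm (P j x) \<le> C * norm x"
    and inj: "\<And>x. (\<forall>j\<in>\<Gamma>. P j x = 0) \<Longrightarrow> x = 0"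
  shows "compl_embeds (l1_free_sum \<Gamma> Y) (l1_norm \<Gamma> Y) ladd lscale
           (free_space (UNIV::'a set) 0) (dualnorm UNIV 0) fadd fscale"
proof -
  interpret disjoint_projections \<Gamma> Y P
    by (rule disjoint_projections.intro[OF bl proj range orth bdd])
  show ?thesis by (rule compl_embeds_l1_free_sum)
qed

end
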